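(* Fix $\mu\in\mathbb{R}$, $\sigma>0$, $\beta\in[0,1]$, $\xi\in[\tfrac12,1]$. Then for every fixed $\lambda>0$ the positive welfare $W_P(t,\lambda)$ is nondecreasing in $t$ on $[0,\infty)$, and for every fixed $t\ge 0$ it is nondecreasing in $\lambda$ on $(0,\infty)$. If moreover $\beta>0$ and $\xi>\tfrac12$, then $W_P$ is strictly increasing in $t$ on $[0,\infty)$ (for fixed $\lambda>0$), and for every fixed $t>0$ it is strictly increasing in $\lambda$ on $(0,\infty)$.
   Context: Model: $p$ and $p_S$ are independent random variables, each distributed $\mathcal{N}(\mu,\sigma^2)$. Parameters: $\beta\in[0,1]$, $\xi\in[\tfrac12,1]$, intensity $\lambda>0$, time $t\ge 0$. Define the share of stereotypes $\eta_S=\eta_S(t,\lambda)=e^{-\lambda t}$ and $\eta_A=1-\eta_S$. The election outcome is the random variable $$\bar p=\eta_S\big(\beta p_S+(1-\beta)p\big)+\eta_A\big(\xi p+(1-\xi)(1-p)\big).$$ Let $\hat p=\mathbb{E}[p\mid \bar p]$. The positive welfare is $W_P(t,\lambda)=-\mathbb{E}[(\hat p-p)^2]$, the institutional welfare is $W_I(t,\lambda)=-\mathbb{E}[(\bar p-p)^2]$, and the bias is $B(t,\lambda)=\mathbb{E}[(\bar p-\hat p)^2]$ (expectations over the joint distribution of $(p,p_S)$). *)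

theory Defs
  imports "HOL-Probability.Probability"
begin

definition etaS :: "real \<Rightarrow> real \<Rightarrow> real" where
  "etaS t l = exp (- l * t)"

definition pbar :: "real \<Rightarrow> real \<Rightarrow> real \<Rightarrow> real \<Rightarrow> ('a \<Rightarrow> real) \<Rightarrow> ('a \<Rightarrow> real) \<Rightarrow> 'a \<Rightarrow> real" where
  "pbar \<beta> \<xi> t l p pS \<omega> =
     etaS t l * (\<beta> * pS \<omega> + (1 - \<beta>) * p \<omega>)
     + (1 - etaS t l) * (\<xi> * p \<omega> + (1 - \<xi>) * (1 - p \<omega>))"

definition WP :: "'a measure \<Rightarrow> real \<Rightarrow> real \<Rightarrow> ('a \<Rightarrow> real) \<Rightarrow> ('a \<Rightarrow> real) \<Rightarrow> real \<Rightarrow> real \<Rightarrow> real" where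
  "WP M \<beta> \<xi> p pS t l =
     - (\<integral>\<omega>. (real_cond_exp M (vimage_algebra (space M) (pbar \<beta> \<xi> t l p pS) borel) p \<omega> - p \<omega>)\<^sup>2 \<partial>M)"

end

theory Submission
  imports Defs
begin

(* The outcome pbar is an affine combination a p + b pS + c of two independent N(mu, sigma^2)
   variables, with a = eta_S (1 - beta) + (1 - eta_S) (2 xi - 1) and b = eta_S beta.  By the
   rotation invariance of the Gaussian, b (p - mu) - a (pS - mu) integrates to zero over every
   event determined by pbar, so E[p | pbar] is the linear regression of p on pbar and
   W_P = - sigma^2 b^2 / (a^2 + b^2).  Since a / b = (1 - beta) / beta + (2 xi - 1) (1 - eta_S) / (eta_S beta)
   grows as eta_S = exp (- lambda t) shrinks, W_P grows with t and with lambda. *)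

lemma nn_integral_lborel_affine_inverse:
  fixes h :: "real \<Rightarrow> ennreal" and b c :: real
  assumes "b \<noteq> 0" and [measurable]: "h \<in> borel_measurable borel"
  shows "(\<integral>\<^sup>+u. h ((u - c) / b) \<partial>lborel) = \<bar>b\<bar> * (\<integral>\<^sup>+y. h y \<partial>lborel)"
  using nn_integral_real_affine[of "\<lambda>u. h ((u - c) / b)" b c] assms by simp

lemma integral_lborel_affine_inverse:
  fixes h :: "real \<Rightarrow> real" and b c :: real
  assumes "b \<noteq> 0"
  shows "(\<integral>u. h ((u - c) / b) \<partial>lborel) = \<bar>b\<bar> * (\<integral>y. h y \<partial>lborel)"
  using lborel_integral_real_affine[of b "\<lambda>u. h ((u - c) / b)" c] assms by simp

lemma lborel_pair_integral_shear:
  fixes f :: "real \<Rightarrow> real \<Rightarrow> real" and a b :: real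
  assumes b: "b \<noteq> 0"
    and f[measurable]: "case_prod f \<in> borel_measurable (lborel \<Otimes>\<^sub>M lborel)"
    and int: "integrable (lborel \<Otimes>\<^sub>M lborel) (case_prod f)"
  shows "integrable (lborel \<Otimes>\<^sub>M lborel) (\<lambda>(x, u). f x ((u - a * x) / b))"
    and "(\<integral>(x, u). f x ((u - a * x) / b) \<partial>(lborel \<Otimes>\<^sub>M lborel))
           = \<bar>b\<bar> * integral\<^sup>L (lborel \<Otimes>\<^sub>M lborel) (case_prod f)"
proof -
  have fx: "(\<lambda>y. f x y) \<in> borel_measurable borel" for x
    using measurable_Pair2[OF f, of x] by (simp add: measurable_lborel1)
  have shear[measurable]: "(\<lambda>(x, u). (x, (u - a * x) / b)) \<in> lborel \<Otimes>\<^sub>M lborel \<rightarrow>\<^sub>M lborel \<Otimes>\<^sub>M lborel"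
    by measurable
  have g[measurable]: "(\<lambda>(x, u). f x ((u - a * x) / b)) \<in> borel_measurable (lborel \<Otimes>\<^sub>M lborel)"
    using measurable_comp[OF shear f] by (simp add: comp_def case_prod_beta')
  have "(\<integral>\<^sup>+z. norm (case_prod (\<lambda>x u. f x ((u - a * x) / b)) z) \<partial>(lborel \<Otimes>\<^sub>M lborel))
        = (\<integral>\<^sup>+x. \<integral>\<^sup>+u. norm (f x ((u - a * x) / b)) \<partial>lborel \<partial>lborel)"
    by (subst lborel.nn_integral_fst[symmetric]) auto
  also have "\<dots> = (\<integral>\<^sup>+x. \<bar>b\<bar> * \<integral>\<^sup>+y. norm (f x y) \<partial>lborel \<partial>lborel)"
  proof (rule nn_integral_cong)
    fix x
    have "(\<lambda>y. ennreal (norm (f x y))) \<in> borel_measurable borel"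
      by (rule measurable_compose[OF fx[of x]]) simp
    then show "(\<integral>\<^sup>+u. norm (f x ((u - a * x) / b)) \<partial>lborel) = \<bar>b\<bar> * \<integral>\<^sup>+y. norm (f x y) \<partial>lborel"
      by (rule nn_integral_lborel_affine_inverse[OF b, where h = "\<lambda>y. ennreal (norm (f x y))"])
  qed
  also have "\<dots> = \<bar>b\<bar> * (\<integral>\<^sup>+z. norm (case_prod f z) \<partial>(lborel \<Otimes>\<^sub>M lborel))"
    by (subst nn_integral_cmult) (auto simp: lborel.nn_integral_fst[symmetric])
  also have "\<dots> < \<infinity>"
    using int by (simp add: integrable_iff_bounded ennreal_mult_less_top)
  finally show int_shear: "integrable (lborel \<Otimes>\<^sub>M lborel) (\<lambda>(x, u). f x ((u - a * x) / b))"
    by (simp add: integrable_iff_bounded case_prod_beta')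
  have "(\<integral>(x, u). f x ((u - a * x) / b) \<partial>(lborel \<Otimes>\<^sub>M lborel))
        = (\<integral>x. \<integral>u. f x ((u - a * x) / b) \<partial>lborel \<partial>lborel)"
    using lborel_pair.integral_fst[OF int_shear] by simp
  also have "\<dots> = (\<integral>x. \<bar>b\<bar> * \<integral>y. f x y \<partial>lborel \<partial>lborel)"
    using integral_lborel_affine_inverse[OF b] by simp
  also have "\<dots> = \<bar>b\<bar> * integral\<^sup>L (lborel \<Otimes>\<^sub>M lborel) (case_prod f)"
    using lborel_pair.integral_fst[of f] int by simp
  finally show "(\<integral>(x, u). f x ((u - a * x) / b) \<partial>(lborel \<Otimes>\<^sub>M lborel))
           = \<bar>b\<bar> * integral\<^sup>L (lborel \<Otimes>\<^sub>M lborel) (case_prod f)" .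
qed

lemma lborel_integral_odd_eq_0:
  fixes f :: "real \<Rightarrow> real"
  assumes odd: "\<And>z. f (m - z) = - f (m + z)"
  shows "integral\<^sup>L lborel f = 0"
proof -
  have "integral\<^sup>L lborel f = (\<integral>z. f (m + z) \<partial>lborel)"
    using lborel_integral_real_affine[of 1 f m] by simp
  moreover have "integral\<^sup>L lborel f = (\<integral>z. f (m - z) \<partial>lborel)"
    using lborel_integral_real_affine[of "-1" f m] by simp
  ultimately show ?thesis
    using odd by simp
qed

lemma normal_density_mult:
  "normal_density \<mu> \<sigma> x * normal_density \<mu> \<sigma> y =
     exp (- ((x - \<mu>)\<^sup>2 + (y - \<mu>)\<^sup>2) / (2 * \<sigma>\<^sup>2)) / (sqrt (2 * pi * \<sigma>\<^sup>2))\<^sup>2"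
  unfolding normal_density_def
  by (simp add: exp_add[symmetric] power2_eq_square add_divide_distrib diff_divide_distrib)

(* (s, (v - a s) / b) is the foot of the perpendicular from the origin to the line a x + b y = v;
   reflecting along the line about it preserves x^2 + y^2 and negates b x - a y. *)
lemma line_reflection:
  fixes a b s v z :: real
  assumes b: "b \<noteq> 0" and foot: "s * (a\<^sup>2 + b\<^sup>2) = a * v"
  shows "(s - z)\<^sup>2 + ((v - a * (s - z)) / b)\<^sup>2 = (s + z)\<^sup>2 + ((v - a * (s + z)) / b)\<^sup>2"
    and "b * (s - z) - a * ((v - a * (s - z)) / b) = - (b * (s + z) - a * ((v - a * (s + z)) / b))"
proof -
  have foot': "a * (v - a * s) = s * b\<^sup>2"
    using foot by (simp add: algebra_simps power2_eq_square)
  have "(b\<^sup>2 * (s - z)\<^sup>2 + (v - a * (s - z))\<^sup>2) - (b\<^sup>2 * (s + z)\<^sup>2 + (v - a * (s + z))\<^sup>2)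
        = 4 * z * (a * (v - a * s) - s * b\<^sup>2)"
    by (simp add: power2_eq_square algebra_simps)
  then have "b\<^sup>2 * (s - z)\<^sup>2 + (v - a * (s - z))\<^sup>2 = b\<^sup>2 * (s + z)\<^sup>2 + (v - a * (s + z))\<^sup>2"
    using foot' by simp
  moreover have "(s + w)\<^sup>2 + ((v - a * (s + w)) / b)\<^sup>2 = (b\<^sup>2 * (s + w)\<^sup>2 + (v - a * (s + w))\<^sup>2) / b\<^sup>2" for w
    using b by (simp add: field_simps power2_eq_square)
  ultimately show "(s - z)\<^sup>2 + ((v - a * (s - z)) / b)\<^sup>2 = (s + z)\<^sup>2 + ((v - a * (s + z)) / b)\<^sup>2"
    using b by (metis diff_conv_add_uminus)
  have "b * (b * (s + w) - a * ((v - a * (s + w)) / b)) = (s * b\<^sup>2 - a * (v - a * s)) + w * (a\<^sup>2 + b\<^sup>2)" for w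
    using b by (simp add: field_simps power2_eq_square)
  then have "b * (b * (s + w) - a * ((v - a * (s + w)) / b)) = w * (a\<^sup>2 + b\<^sup>2)" for w
    using foot' by simp
  from this[of "- z"] this[of z]
  have "b * (b * (s - z) - a * ((v - a * (s - z)) / b)) = b * (- (b * (s + z) - a * ((v - a * (s + z)) / b)))"
    by (simp add: algebra_simps)
  then show "b * (s - z) - a * ((v - a * (s - z)) / b) = - (b * (s + z) - a * ((v - a * (s + z)) / b))"
    using b by simp
qed

lemma normal_density_line_integral_eq_0:
  fixes a b u \<mu> \<sigma> :: real
  assumes b: "b \<noteq> 0"
  shows "(\<integral>x. normal_density \<mu> \<sigma> x * normal_density \<mu> \<sigma> ((u - a * x) / b)
            * (b * (x - \<mu>) - a * ((u - a * x) / b - \<mu>)) \<partial>lborel) = 0"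
proof -
  define v where "v = u - (a + b) * \<mu>"
  define s where "s = a * v / (a\<^sup>2 + b\<^sup>2)"
  have "a\<^sup>2 + b\<^sup>2 > 0"
    using b by (simp add: add_nonneg_pos)
  then have foot: "s * (a\<^sup>2 + b\<^sup>2) = a * v"
    by (simp add: s_def)
  have y: "(u - a * (\<mu> + s + w)) / b - \<mu> = (v - a * (s + w)) / b" for w
    using b by (simp add: v_def field_simps)
  show ?thesis
  proof (rule lborel_integral_odd_eq_0[where m = "\<mu> + s"])
    fix z
    have sq: "(\<mu> + s - z - \<mu>)\<^sup>2 + ((u - a * (\<mu> + s - z)) / b - \<mu>)\<^sup>2
              = (\<mu> + s + z - \<mu>)\<^sup>2 + ((u - a * (\<mu> + s + z)) / b - \<mu>)\<^sup>2"
      using line_reflection(1)[OF b foot, of z] y[of z] y[of "- z"] by simp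
    have cross: "b * (\<mu> + s - z - \<mu>) - a * ((u - a * (\<mu> + s - z)) / b - \<mu>)
                 = - (b * (\<mu> + s + z - \<mu>) - a * ((u - a * (\<mu> + s + z)) / b - \<mu>))"
      using line_reflection(2)[OF b foot, of z] y[of z] y[of "- z"] by simp
    show "normal_density \<mu> \<sigma> (\<mu> + s - z) * normal_density \<mu> \<sigma> ((u - a * (\<mu> + s - z)) / b)
            * (b * (\<mu> + s - z - \<mu>) - a * ((u - a * (\<mu> + s - z)) / b - \<mu>))
          = - (normal_density \<mu> \<sigma> (\<mu> + s + z) * normal_density \<mu> \<sigma> ((u - a * (\<mu> + s + z)) / b)
            * (b * (\<mu> + s + z - \<mu>) - a * ((u - a * (\<mu> + s + z)) / b - \<mu>)))"
      unfolding normal_density_mult sq cross by (simp only: mult_minus_right)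
  qed
qed

lemma lborel_pair_normal_orthogonal_integral_eq_0:
  fixes a b c \<mu> \<sigma> :: real and B :: "real set"
  assumes b: "b \<noteq> 0" and B[measurable]: "B \<in> sets borel"
    and int: "integrable (lborel \<Otimes>\<^sub>M lborel) (\<lambda>(x, y). normal_density \<mu> \<sigma> x * normal_density \<mu> \<sigma> y
                 * (indicator B (a * x + b * y + c) * (b * (x - \<mu>) - a * (y - \<mu>))))"
  shows "(\<integral>(x, y). normal_density \<mu> \<sigma> x * normal_density \<mu> \<sigma> y
            * (indicator B (a * x + b * y + c) * (b * (x - \<mu>) - a * (y - \<mu>))) \<partial>(lborel \<Otimes>\<^sub>M lborel)) = 0"
proof -
  define F where "F x y = normal_density \<mu> \<sigma> x * normal_density \<mu> \<sigma> y
                 * (indicator B (a * x + b * y + c) * (b * (x - \<mu>) - a * (y - \<mu>)))" for x y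
  have F_meas: "case_prod F \<in> borel_measurable (lborel \<Otimes>\<^sub>M lborel)"
    unfolding F_def by measurable
  have line: "(\<integral>x. F x ((u - a * x) / b) \<partial>lborel) = 0" for u
  proof -
    have "a * x + b * ((u - a * x) / b) + c = u + c" for x
      using b by simp
    then have "F x ((u - a * x) / b) = indicator B (u + c) * (normal_density \<mu> \<sigma> x
                 * normal_density \<mu> \<sigma> ((u - a * x) / b) * (b * (x - \<mu>) - a * ((u - a * x) / b - \<mu>)))" for x
      unfolding F_def by simp
    then show ?thesis
      using normal_density_line_integral_eq_0[OF b] by simp
  qed
  note shear = lborel_pair_integral_shear[OF b F_meas int[folded F_def], of a]
  have "\<bar>b\<bar> * integral\<^sup>L (lborel \<Otimes>\<^sub>M lborel) (case_prod F)
        = (\<integral>u. \<integral>x. F x ((u - a * x) / b) \<partial>lborel \<partial>lborel)"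
    using shear(2) lborel_pair.integral_snd[OF shear(1)] by simp
  also have "\<dots> = 0"
    by (simp add: line)
  finally have "integral\<^sup>L (lborel \<Otimes>\<^sub>M lborel) (case_prod F) = 0"
    using b by simp
  then show ?thesis
    unfolding F_def by simp
qed

lemma (in prob_space) distributed_pair_indep_lborel:
  fixes X Y :: "'a \<Rightarrow> real"
  assumes X: "distributed M lborel X (\<lambda>x. ennreal (f x))" and Y: "distributed M lborel Y (\<lambda>y. ennreal (g y))"
    and indep: "indep_var borel X borel Y"
    and f: "\<And>x. 0 \<le> f x" and g: "\<And>y. 0 \<le> g y"
  shows "distributed M (lborel \<Otimes>\<^sub>M lborel) (\<lambda>\<omega>. (X \<omega>, Y \<omega>)) (\<lambda>z. ennreal (f (fst z) * g (snd z)))"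
proof -
  \<comment> \<open>The hypothesis speaks about borel, the library lemma about lborel; only the sets matter.\<close>
  have sets: "sets (case_bool lborel lborel i) = sets (case_bool borel borel i)" for i
    by (cases i) auto
  have meas: "measurable M (case_bool lborel lborel i) = measurable M (case_bool borel borel i)" for i
    by (cases i) auto
  have "indep_var lborel X lborel Y"
    using indep unfolding indep_var_def indep_vars_def2 sets meas .
  from distributed_joint_indep[OF lborel.sigma_finite_measure_axioms lborel.sigma_finite_measure_axioms X Y this]
  show ?thesis
    by (simp add: case_prod_beta' ennreal_mult f g)
qed

locale indep_normal_pair = prob_space +
  fixes p q :: "'a \<Rightarrow> real" and \<mu> \<sigma> :: real
  assumes sigma_pos: "\<sigma> > 0"
    and distr_p: "distributed M lborel p (normal_density \<mu> \<sigma>)"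
    and distr_q: "distributed M lborel q (normal_density \<mu> \<sigma>)"
    and indep: "indep_var borel p borel q"
begin

lemma measurable_p[measurable]: "p \<in> borel_measurable M"
  and measurable_q[measurable]: "q \<in> borel_measurable M"
  using distributed_measurable[OF distr_p] distributed_measurable[OF distr_q] by simp_all

lemma integrable_p: "integrable M p"
  and integrable_q: "integrable M q"
  using distributed_integrable_var[OF distr_p normal_density_nonneg integrable_normal_moment_nz_1]
    distributed_integrable_var[OF distr_q normal_density_nonneg integrable_normal_moment_nz_1]
    sigma_pos by simp_all

lemma distributed_pair:
  "distributed M (lborel \<Otimes>\<^sub>M lborel) (\<lambda>\<omega>. (p \<omega>, q \<omega>))
     (\<lambda>z. ennreal (normal_density \<mu> \<sigma> (fst z) * normal_density \<mu> \<sigma> (snd z)))"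
  by (rule distributed_pair_indep_lborel[OF distr_p distr_q indep normal_density_nonneg normal_density_nonneg])

lemma orthogonal_integral_eq_0:
  assumes b: "b \<noteq> 0" and B[measurable]: "B \<in> sets borel"
  shows "(\<integral>\<omega>. indicator B (a * p \<omega> + b * q \<omega> + c) * (b * (p \<omega> - \<mu>) - a * (q \<omega> - \<mu>)) \<partial>M) = 0"
proof -
  define h where "h z = indicator B (a * fst z + b * snd z + c) * (b * (fst z - \<mu>) - a * (snd z - \<mu>))"
    for z :: "real \<times> real"
  have h_meas[measurable]: "h \<in> borel_measurable (lborel \<Otimes>\<^sub>M lborel)"
    unfolding h_def by measurable
  have int_M: "integrable M (\<lambda>\<omega>. h (p \<omega>, q \<omega>))"
  proof -
    have "integrable M (\<lambda>\<omega>. b * (p \<omega> - \<mu>) - a * (q \<omega> - \<mu>))"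
      using integrable_p integrable_q by auto
    then show ?thesis
      unfolding h_def fst_conv snd_conv by (rule Bochner_Integration.integrable_bound) (auto split: split_indicator)
  qed
  have "(\<integral>\<omega>. h (p \<omega>, q \<omega>) \<partial>M)
        = (\<integral>z. normal_density \<mu> \<sigma> (fst z) * normal_density \<mu> \<sigma> (snd z) * h z \<partial>(lborel \<Otimes>\<^sub>M lborel))"
    using distributed_integral[OF distributed_pair h_meas] by simp
  also have "\<dots> = 0"
    using lborel_pair_normal_orthogonal_integral_eq_0[OF b B, of \<mu> \<sigma> a c]
      distributed_integrable[OF distributed_pair h_meas] int_M
    by (simp add: h_def case_prod_beta' mult.assoc)
  finally show ?thesis
    by (simp add: h_def)
qed

lemma real_cond_exp_linear_combination:
  assumes D: "a\<^sup>2 + b\<^sup>2 > 0"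
  shows "AE \<omega> in M. real_cond_exp M (vimage_algebra (space M) (\<lambda>\<omega>. a * p \<omega> + b * q \<omega> + c) borel) p \<omega>
           = \<mu> + a * (a * (p \<omega> - \<mu>) + b * (q \<omega> - \<mu>)) / (a\<^sup>2 + b\<^sup>2)"
proof -
  define X where "X \<omega> = a * p \<omega> + b * q \<omega> + c" for \<omega>
  define F where "F = vimage_algebra (space M) X borel"
  define g where "g \<omega> = \<mu> + a * (a * (p \<omega> - \<mu>) + b * (q \<omega> - \<mu>)) / (a\<^sup>2 + b\<^sup>2)" for \<omega>
  have X_meas[measurable]: "X \<in> borel_measurable M"
    unfolding X_def by measurable
  have sets_F: "sets F = {X -` B \<inter> space M | B. B \<in> sets borel}"
    unfolding F_def by (rule sets_vimage_algebra2) simp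
  have "subalgebra M F"
    unfolding subalgebra_def using sets_F by (auto simp: F_def)
  then interpret F: finite_measure_subalgebra M F
    by unfold_locales
  have "g = (\<lambda>\<omega>. \<mu> + a * (X \<omega> - c - (a + b) * \<mu>) / (a\<^sup>2 + b\<^sup>2))"
    by (simp add: fun_eq_iff g_def X_def algebra_simps)
  moreover have "X \<in> borel_measurable F"
    unfolding F_def by (rule measurable_vimage_algebra1) simp
  ultimately have g_meas: "g \<in> borel_measurable F"
    by simp
  have int_g: "integrable M g"
    unfolding g_def using integrable_p integrable_q by auto
  have residual: "p \<omega> - g \<omega> = b * (b * (p \<omega> - \<mu>) - a * (q \<omega> - \<mu>)) / (a\<^sup>2 + b\<^sup>2)" for \<omega>
  proof -
    have "(a\<^sup>2 + b\<^sup>2) * g \<omega> = (a\<^sup>2 + b\<^sup>2) * \<mu> + a * (a * (p \<omega> - \<mu>) + b * (q \<omega> - \<mu>))"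
      using D unfolding g_def distrib_left by simp
    then have "(a\<^sup>2 + b\<^sup>2) * (p \<omega> - g \<omega>) = b * (b * (p \<omega> - \<mu>) - a * (q \<omega> - \<mu>))"
      by (simp add: right_diff_distrib power2_eq_square algebra_simps)
    then show ?thesis
      using D by (auto simp: eq_divide_eq mult.commute)
  qed
  have "AE \<omega> in M. real_cond_exp M F p \<omega> = g \<omega>"
  proof (rule F.real_cond_exp_charact)
    fix A
    assume "A \<in> sets F"
    then obtain B where B[measurable]: "B \<in> sets borel" and A: "A = X -` B \<inter> space M"
      using sets_F by auto
    have A_meas: "A \<in> sets M"
      unfolding A by measurable
    have "(\<integral>x\<in>A. p x \<partial>M) - (\<integral>x\<in>A. g x \<partial>M) = (\<integral>x\<in>A. p x - g x \<partial>M)"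
      using integrable_mult_indicator[OF A_meas integrable_p] integrable_mult_indicator[OF A_meas int_g]
      by (simp add: set_integrable_def)
    also have "\<dots> = b / (a\<^sup>2 + b\<^sup>2) * (\<integral>x. indicator B (a * p x + b * q x + c) * (b * (p x - \<mu>) - a * (q x - \<mu>)) \<partial>M)"
    proof -
      have "indicator A x * (p x - g x)
            = b / (a\<^sup>2 + b\<^sup>2) * (indicator B (a * p x + b * q x + c) * (b * (p x - \<mu>) - a * (q x - \<mu>)))"
        if "x \<in> space M" for x
        using that by (simp add: A X_def residual split: split_indicator)
      then show ?thesis
        unfolding set_lebesgue_integral_def by (simp cong: Bochner_Integration.integral_cong)
    qed
    also have "\<dots> = 0"
      using orthogonal_integral_eq_0[OF _ B] by (cases "b = 0") auto
    finally show "(\<integral>x\<in>A. p x \<partial>M) = (\<integral>x\<in>A. g x \<partial>M)"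
      by simp
  qed (use integrable_p int_g g_meas in auto)
  then show ?thesis
    unfolding F_def X_def[abs_def] g_def .
qed

lemma integral_orthogonal_combination_square:
  "(\<integral>\<omega>. (b * (p \<omega> - \<mu>) - a * (q \<omega> - \<mu>))\<^sup>2 \<partial>M) = (a\<^sup>2 + b\<^sup>2) * \<sigma>\<^sup>2"
proof -
  define P where "P \<omega> = p \<omega> - \<mu>" for \<omega>
  define Q where "Q \<omega> = q \<omega> - \<mu>" for \<omega>
  have int_P: "integrable M P" and int_Q: "integrable M Q"
    unfolding P_def Q_def using integrable_p integrable_q by auto
  have int_P2: "integrable M (\<lambda>\<omega>. (P \<omega>)\<^sup>2)" and int_Q2: "integrable M (\<lambda>\<omega>. (Q \<omega>)\<^sup>2)"
    using distributed_integrable[OF distr_p, of "\<lambda>x. (x - \<mu>)\<^sup>2"]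
      distributed_integrable[OF distr_q, of "\<lambda>x. (x - \<mu>)\<^sup>2"] integrable_normal_moment[of \<sigma> \<mu> 2] sigma_pos
    unfolding P_def Q_def by simp_all
  have EP2: "(\<integral>\<omega>. (P \<omega>)\<^sup>2 \<partial>M) = \<sigma>\<^sup>2" and EQ2: "(\<integral>\<omega>. (Q \<omega>)\<^sup>2 \<partial>M) = \<sigma>\<^sup>2"
    using normal_distributed_variance[OF sigma_pos distr_p] normal_distributed_expectation[OF sigma_pos distr_p]
      normal_distributed_variance[OF sigma_pos distr_q] normal_distributed_expectation[OF sigma_pos distr_q]
    unfolding P_def Q_def by simp_all
  have indep_PQ: "indep_var borel P borel Q"
    using indep_var_compose[OF indep, of "\<lambda>x. x - \<mu>" borel "\<lambda>x. x - \<mu>" borel]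
    unfolding P_def Q_def comp_def by simp
  have "(\<integral>\<omega>. P \<omega> \<partial>M) = 0"
    using normal_distributed_expectation[OF sigma_pos distr_p] integrable_p prob_space
    unfolding P_def by simp
  then have EPQ: "(\<integral>\<omega>. P \<omega> * Q \<omega> \<partial>M) = 0"
    using indep_var_lebesgue_integral[OF indep_PQ int_P int_Q] by simp
  have "(b * P \<omega> - a * Q \<omega>)\<^sup>2 = b\<^sup>2 * (P \<omega>)\<^sup>2 - 2 * a * b * (P \<omega> * Q \<omega>) + a\<^sup>2 * (Q \<omega>)\<^sup>2" for \<omega>
    by (simp add: power2_eq_square algebra_simps)
  then have "(\<integral>\<omega>. (b * P \<omega> - a * Q \<omega>)\<^sup>2 \<partial>M)
        = b\<^sup>2 * (\<integral>\<omega>. (P \<omega>)\<^sup>2 \<partial>M) - 2 * a * b * (\<integral>\<omega>. P \<omega> * Q \<omega> \<partial>M) + a\<^sup>2 * (\<integral>\<omega>. (Q \<omega>)\<^sup>2 \<partial>M)"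
    using int_P2 int_Q2 indep_var_integrable[OF indep_PQ int_P int_Q] by simp
  also have "\<dots> = (a\<^sup>2 + b\<^sup>2) * \<sigma>\<^sup>2"
    unfolding EP2 EQ2 EPQ by (simp add: algebra_simps)
  finally show ?thesis
    by (simp add: P_def Q_def)
qed

lemma real_cond_exp_linear_combination_mse:
  assumes D: "a\<^sup>2 + b\<^sup>2 > 0"
  shows "(\<integral>\<omega>. (real_cond_exp M (vimage_algebra (space M) (\<lambda>\<omega>. a * p \<omega> + b * q \<omega> + c) borel) p \<omega> - p \<omega>)\<^sup>2 \<partial>M)
           = \<sigma>\<^sup>2 * b\<^sup>2 / (a\<^sup>2 + b\<^sup>2)"
proof -
  have residual: "\<mu> + a * (a * (p \<omega> - \<mu>) + b * (q \<omega> - \<mu>)) / (a\<^sup>2 + b\<^sup>2) - p \<omega>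
                  = - b * (b * (p \<omega> - \<mu>) - a * (q \<omega> - \<mu>)) / (a\<^sup>2 + b\<^sup>2)" for \<omega>
  proof -
    have "a\<^sup>2 + b\<^sup>2 \<noteq> 0"
      using D by linarith
    then show ?thesis
      by (simp add: field_simps power2_eq_square)
  qed
  have "AE \<omega> in M. (real_cond_exp M (vimage_algebra (space M) (\<lambda>\<omega>. a * p \<omega> + b * q \<omega> + c) borel) p \<omega> - p \<omega>)\<^sup>2
          = (b / (a\<^sup>2 + b\<^sup>2))\<^sup>2 * (b * (p \<omega> - \<mu>) - a * (q \<omega> - \<mu>))\<^sup>2"
    using real_cond_exp_linear_combination[OF D, where c = c]
    by eventually_elim (simp add: residual power_mult_distrib power_divide)
  then have "(\<integral>\<omega>. (real_cond_exp M (vimage_algebra (space M) (\<lambda>\<omega>. a * p \<omega> + b * q \<omega> + c) borel) p \<omega> - p \<omega>)\<^sup>2 \<partial>M)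
        = (\<integral>\<omega>. (b / (a\<^sup>2 + b\<^sup>2))\<^sup>2 * (b * (p \<omega> - \<mu>) - a * (q \<omega> - \<mu>))\<^sup>2 \<partial>M)"
    by (intro integral_cong_AE) auto
  also have "\<dots> = (b / (a\<^sup>2 + b\<^sup>2))\<^sup>2 * ((a\<^sup>2 + b\<^sup>2) * \<sigma>\<^sup>2)"
    by (simp add: integral_orthogonal_combination_square)
  also have "\<dots> = \<sigma>\<^sup>2 * b\<^sup>2 / (a\<^sup>2 + b\<^sup>2)"
    using D by (simp add: power2_eq_square)
  finally show ?thesis .
qed

end

lemma square_share_le:
  fixes a1 b1 a2 b2 :: real
  assumes "a1\<^sup>2 + b1\<^sup>2 > 0" and "a2\<^sup>2 + b2\<^sup>2 > 0" and "0 \<le> a1" and "0 \<le> b2"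
    and "b2 * a1 \<le> b1 * a2"
  shows "b2\<^sup>2 / (a2\<^sup>2 + b2\<^sup>2) \<le> b1\<^sup>2 / (a1\<^sup>2 + b1\<^sup>2)"
proof -
  have "(b2 * a1)\<^sup>2 \<le> (b1 * a2)\<^sup>2"
    using assms(3-5) by (intro power_mono) auto
  then have "b2\<^sup>2 * (a1\<^sup>2 + b1\<^sup>2) \<le> b1\<^sup>2 * (a2\<^sup>2 + b2\<^sup>2)"
    by (simp add: power_mult_distrib algebra_simps)
  then show ?thesis
    using assms(1,2) by (simp add: divide_le_eq le_divide_eq mult.commute)
qed

lemma square_share_less:
  fixes a1 b1 a2 b2 :: real
  assumes "a1\<^sup>2 + b1\<^sup>2 > 0" and "a2\<^sup>2 + b2\<^sup>2 > 0" and "0 \<le> a1" and "0 \<le> b2"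
    and "b2 * a1 < b1 * a2"
  shows "b2\<^sup>2 / (a2\<^sup>2 + b2\<^sup>2) < b1\<^sup>2 / (a1\<^sup>2 + b1\<^sup>2)"
proof -
  have "(b2 * a1)\<^sup>2 < (b1 * a2)\<^sup>2"
    using assms(3-5) by (intro power_strict_mono) auto
  then have "b2\<^sup>2 * (a1\<^sup>2 + b1\<^sup>2) < b1\<^sup>2 * (a2\<^sup>2 + b2\<^sup>2)"
    by (simp add: power_mult_distrib algebra_simps)
  then show ?thesis
    using assms(1,2) by (simp add: divide_less_eq less_divide_eq mult.commute)
qed

definition weight_p :: "real \<Rightarrow> real \<Rightarrow> real \<Rightarrow> real" where
  "weight_p \<beta> \<xi> e = e * (1 - \<beta>) + (1 - e) * (2 * \<xi> - 1)"

definition unexplained_share :: "real \<Rightarrow> real \<Rightarrow> real \<Rightarrow> real" where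
  "unexplained_share \<beta> \<xi> e = (e * \<beta>)\<^sup>2 / ((weight_p \<beta> \<xi> e)\<^sup>2 + (e * \<beta>)\<^sup>2)"

lemma pbar_eq_affine:
  "pbar \<beta> \<xi> t l p pS = (\<lambda>\<omega>. weight_p \<beta> \<xi> (etaS t l) * p \<omega> + (etaS t l * \<beta>) * pS \<omega> + (1 - etaS t l) * (1 - \<xi>))"
  by (simp add: fun_eq_iff pbar_def weight_p_def algebra_simps)

lemma etaS_pos: "0 < etaS t l"
  by (simp add: etaS_def)

lemma etaS_le_1: "0 \<le> t \<Longrightarrow> 0 \<le> l \<Longrightarrow> etaS t l \<le> 1"
  by (simp add: etaS_def)

lemma etaS_le_etaS_iff: "etaS t2 l2 \<le> etaS t1 l1 \<longleftrightarrow> l1 * t1 \<le> l2 * t2"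
  by (simp add: etaS_def)

lemma etaS_less_etaS_iff: "etaS t2 l2 < etaS t1 l1 \<longleftrightarrow> l1 * t1 < l2 * t2"
  by (simp add: etaS_def)

lemma weight_p_nonneg:
  assumes "\<beta> \<le> 1" "1/2 \<le> \<xi>" "0 \<le> e" "e \<le> 1"
  shows "0 \<le> weight_p \<beta> \<xi> e"
  using assms by (simp add: weight_p_def)

lemma weights_square_pos:
  assumes "0 \<le> \<beta>" "\<beta> \<le> 1" "1/2 \<le> \<xi>" "0 < e" "e \<le> 1"
  shows "(weight_p \<beta> \<xi> e)\<^sup>2 + (e * \<beta>)\<^sup>2 > 0"
proof (cases "\<beta> = 0")
  case True
  then have "weight_p \<beta> \<xi> e > 0"
    using assms by (simp add: weight_p_def add_pos_nonneg)
  then show ?thesis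
    by (simp add: add_pos_nonneg)
next
  case False
  then show ?thesis
    using assms by (simp add: add_nonneg_pos)
qed

lemma unexplained_share_mono:
  assumes "0 \<le> \<beta>" "\<beta> \<le> 1" "1/2 \<le> \<xi>" "0 < e2" "e2 \<le> e1" "e1 \<le> 1"
  shows "unexplained_share \<beta> \<xi> e2 \<le> unexplained_share \<beta> \<xi> e1"
    and "0 < \<beta> \<Longrightarrow> 1/2 < \<xi> \<Longrightarrow> e2 < e1 \<Longrightarrow> unexplained_share \<beta> \<xi> e2 < unexplained_share \<beta> \<xi> e1"
proof -
  note pos1 = weights_square_pos[of \<beta> \<xi> e1] and pos2 = weights_square_pos[of \<beta> \<xi> e2]
  have a1: "0 \<le> weight_p \<beta> \<xi> e1"
    using assms by (intro weight_p_nonneg) auto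
  have b2: "0 \<le> e2 * \<beta>"
    using assms by simp
  \<comment> \<open>The ratio (e \<beta>) / weight_p \<beta> \<xi> e is nondecreasing in e.\<close>
  have cross: "(e1 * \<beta>) * weight_p \<beta> \<xi> e2 - (e2 * \<beta>) * weight_p \<beta> \<xi> e1 = \<beta> * (2 * \<xi> - 1) * (e1 - e2)"
    by (simp add: weight_p_def algebra_simps)
  have "0 \<le> \<beta> * (2 * \<xi> - 1) * (e1 - e2)"
    using assms by simp
  then have "(e2 * \<beta>) * weight_p \<beta> \<xi> e1 \<le> (e1 * \<beta>) * weight_p \<beta> \<xi> e2"
    using cross by linarith
  then show "unexplained_share \<beta> \<xi> e2 \<le> unexplained_share \<beta> \<xi> e1"
    unfolding unexplained_share_def using assms by (intro square_share_le[OF pos1 pos2 a1 b2]) auto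
  assume "0 < \<beta>" "1/2 < \<xi>" "e2 < e1"
  then have "0 < \<beta> * (2 * \<xi> - 1) * (e1 - e2)"
    by simp
  then have "(e2 * \<beta>) * weight_p \<beta> \<xi> e1 < (e1 * \<beta>) * weight_p \<beta> \<xi> e2"
    using cross by linarith
  then show "unexplained_share \<beta> \<xi> e2 < unexplained_share \<beta> \<xi> e1"
    unfolding unexplained_share_def using assms by (intro square_share_less[OF pos1 pos2 a1 b2]) auto
qed

lemma (in indep_normal_pair) WP_eq_unexplained_share:
  assumes "0 \<le> \<beta>" "\<beta> \<le> 1" "1/2 \<le> \<xi>" "0 \<le> t" "0 \<le> l"
  shows "WP M \<beta> \<xi> p q t l = - (\<sigma>\<^sup>2 * unexplained_share \<beta> \<xi> (etaS t l))"
  using real_cond_exp_linear_combination_mse[OF weights_square_pos, of \<beta> \<xi> "etaS t l" "(1 - etaS t l) * (1 - \<xi>)"]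
    assms etaS_pos etaS_le_1
  by (simp add: WP_def pbar_eq_affine unexplained_share_def)

lemma (in indep_normal_pair) WP_mono_etaS:
  assumes "0 \<le> \<beta>" "\<beta> \<le> 1" "1/2 \<le> \<xi>" "0 \<le> t1" "0 \<le> l1" "0 \<le> t2" "0 \<le> l2"
    and "etaS t2 l2 \<le> etaS t1 l1"
  shows "WP M \<beta> \<xi> p q t1 l1 \<le> WP M \<beta> \<xi> p q t2 l2"
    and "0 < \<beta> \<Longrightarrow> 1/2 < \<xi> \<Longrightarrow> etaS t2 l2 < etaS t1 l1 \<Longrightarrow> WP M \<beta> \<xi> p q t1 l1 < WP M \<beta> \<xi> p q t2 l2"
  using unexplained_share_mono[OF assms(1-3) etaS_pos assms(8) etaS_le_1] sigma_pos assms
  by (simp_all add: WP_eq_unexplained_share)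

theorem proposition1:
  fixes M :: "'a measure" and p pS :: "'a \<Rightarrow> real"
    and \<mu> \<sigma> \<beta> \<xi> :: real
  assumes "prob_space M"
    and "\<sigma> > 0"
    and "0 \<le> \<beta>" and "\<beta> \<le> 1"
    and "1/2 \<le> \<xi>" and "\<xi> \<le> 1"
    and "distributed M lborel p (normal_density \<mu> \<sigma>)"
    and "distributed M lborel pS (normal_density \<mu> \<sigma>)"
    and "prob_space.indep_var M borel p borel pS"
  shows "(\<forall>l>0. mono_on {0..} (\<lambda>t. WP M \<beta> \<xi> p pS t l))
       \<and> (\<forall>t\<ge>0. mono_on {0<..} (\<lambda>l. WP M \<beta> \<xi> p pS t l))
       \<and> (\<beta> > 0 \<and> \<xi> > 1/2 \<longrightarrow>
            (\<forall>l>0. strict_mono_on {0..} (\<lambda>t. WP M \<beta> \<xi> p pS t l))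
          \<and> (\<forall>t>0. strict_mono_on {0<..} (\<lambda>l. WP M \<beta> \<xi> p pS t l)))"
proof -
  interpret indep_normal_pair M p pS \<mu> \<sigma>
    using assms by (simp add: indep_normal_pair_def indep_normal_pair_axioms_def)
  note WP_mono = WP_mono_etaS[OF assms(3-5), unfolded etaS_le_etaS_iff etaS_less_etaS_iff]
  have "mono_on {0..} (\<lambda>t. WP M \<beta> \<xi> p pS t l)" if "l > 0" for l
    using that by (intro mono_onI WP_mono(1)) (auto intro: mult_left_mono)
  moreover have "mono_on {0<..} (\<lambda>l. WP M \<beta> \<xi> p pS t l)" if "t \<ge> 0" for t
    using that by (intro mono_onI WP_mono(1)) (auto intro: mult_right_mono)
  moreover have "strict_mono_on {0..} (\<lambda>t. WP M \<beta> \<xi> p pS t l)" if "\<beta> > 0" "\<xi> > 1/2" "l > 0" for l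
    using that by (intro strict_mono_onI WP_mono(2)) (auto intro: mult_left_mono)
  moreover have "strict_mono_on {0<..} (\<lambda>l. WP M \<beta> \<xi> p pS t l)" if "\<beta> > 0" "\<xi> > 1/2" "t > 0" for t
    using that by (intro strict_mono_onI WP_mono(2)) (auto intro: mult_right_mono)
  ultimately show ?thesis
    by blast
qed

end
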